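(* There is an absolute constant $C>0$ such that for every $n\ge2$, all monotone non-decreasing subadditive valuations $v_1,\dots,v_n:[0,1]\to\mathbb R_{\ge0}$ and all budgets $B_1,\dots,B_n>0$, the final allocation $y$ of the Estimate-and-Price auction satisfies $\bar W(y)\ge\frac{1}{C\log^2 n}\bar W^*$.
   Context: Subadditive: $v_i(a+b)\le v_i(a)+v_i(b)$ whenever $a,b,a+b\in[0,1]$. One divisible good (the interval $[0,1]$), $n\ge2$ players. Let $\bar v_i(y)=\min\{v_i(y),B_i\}$ and $k=\lceil 8\log_2 n\rceil$. Liquid welfare: $\bar W(y)=\sum_i\min\{v_i(y_i),B_i\}$; $\bar W^*=\sup\{\bar W(y):y\in\mathbb R^n_{\ge0},\sum_iy_i=1\}$. Sell-Without-$r$ (for a player $r$): define $p:[0,\frac12]\to\mathbb R_{\ge0}$ by $p(t)=p_j=\frac{2^j}{8}\bar v_r(\frac12)$ for $t\in[\frac{j-1}{2k},\frac{j}{2k})$, $j=1,\dots,k$. The players other than $r$ are processed in a fixed arbitrary order; when player $i$'s turn comes, let $z_i$ be the total amount taken by earlier players; player $i$ takes $x_i\in[0,\frac12-z_i]$ maximizing $v_i(x_i)-\int_{z_i}^{z_i+x_i}p(t)\,dt$ subject to $\int_{z_i}^{z_i+x_i}p(t)\,dt\le B_i$, and pays $\pi_i=\int_{z_i}^{z_i+x_i}p(t)\,dt$. Estimate-and-Price: let $r_1=\arg\max_i\bar v_i(\frac12)$ and $r_2=\arg\max_{i\ne r_1}\bar v_i(\frac12)$ (fixed tie-breaking). Let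 $(x,\pi)$ be the outcome of Sell-Without-$r_1$ on players $[n]\setminus\{r_1\}$ and $(x',\pi')$ that of Sell-Without-$r_2$ on players $[n]\setminus\{r_2\}$. Each $i\ne r_1$ receives $x_i$ and pays $\pi_i$. Player $r_1$ receives $x'_{r_1}$ and pays $\pi'_{r_1}$ if $v_{r_1}(x'_{r_1})-\pi'_{r_1}\ge v_{r_1}(\frac12)-2\bar v_{r_2}(\frac12)$; otherwise he receives $\frac12$ and pays $2\bar v_{r_2}(\frac12)$. *)

theory Defs
  imports "HOL-Analysis.Analysis"
begin

definition valuation :: "(real \<Rightarrow> real) \<Rightarrow> bool" where
  "valuation f \<longleftrightarrow>
     f 0 = 0 \<and>
     (\<forall>a\<in>{0..1}. 0 \<le> f a) \<and>
     (\<forall>a\<in>{0..1}. \<forall>b\<in>{0..1}. a \<le> b \<longrightarrow> f a \<le> f b) \<and>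
     (\<forall>a b. 0 \<le> a \<longrightarrow> 0 \<le> b \<longrightarrow> a + b \<le> 1 \<longrightarrow> f (a + b) \<le> f a + f b)"

definition vbar :: "(nat \<Rightarrow> real \<Rightarrow> real) \<Rightarrow> (nat \<Rightarrow> real) \<Rightarrow> nat \<Rightarrow> real \<Rightarrow> real" where
  "vbar v B i y = min (v i y) (B i)"

definition liquid_welfare :: "(nat \<Rightarrow> real \<Rightarrow> real) \<Rightarrow> (nat \<Rightarrow> real) \<Rightarrow> nat \<Rightarrow> (nat \<Rightarrow> real) \<Rightarrow> real" where
  "liquid_welfare v B n y = (\<Sum>i<n. vbar v B i (y i))"

definition opt_liquid_welfare :: "(nat \<Rightarrow> real \<Rightarrow> real) \<Rightarrow> (nat \<Rightarrow> real) \<Rightarrow> nat \<Rightarrow> real" where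
  "opt_liquid_welfare v B n =
     Sup {liquid_welfare v B n y | y. (\<forall>i<n. 0 \<le> y i) \<and> (\<Sum>i<n. y i) = 1}"

definition kpar :: "nat \<Rightarrow> nat" where
  "kpar n = nat \<lceil>8 * log 2 (real n)\<rceil>"

text \<open>Price curve p(t) = 2^j/8 * c for t in [(j-1)/(2k), j/(2k)), j = 1..k,
  where c = vbar_r(1/2); it is only used on [0,1/2].\<close>
definition price :: "nat \<Rightarrow> real \<Rightarrow> real \<Rightarrow> real" where
  "price k c t = (if 0 \<le> t \<and> t < 1/2
                  then 2 ^ (nat \<lfloor>2 * real k * t\<rfloor> + 1) / 8 * c else 0)"

definition cost :: "nat \<Rightarrow> real \<Rightarrow> real \<Rightarrow> real \<Rightarrow> real" where
  "cost k c z a = integral {z..z + a} (price k c)"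

text \<open>(x, pay) is a possible outcome of Sell-Without-r, where the players
  other than r are processed in the order given by the list ord.\<close>
definition sell_without ::
  "(nat \<Rightarrow> real \<Rightarrow> real) \<Rightarrow> (nat \<Rightarrow> real) \<Rightarrow> nat \<Rightarrow> nat \<Rightarrow> nat list
    \<Rightarrow> (nat \<Rightarrow> real) \<Rightarrow> (nat \<Rightarrow> real) \<Rightarrow> bool" where
  "sell_without v B n r ord x pay \<longleftrightarrow>
     distinct ord \<and> set ord = {i. i < n \<and> i \<noteq> r} \<and>
     (\<forall>m < length ord.
        let i = ord ! m;
            z = (\<Sum>j<m. x (ord ! j));
            P = cost (kpar n) (vbar v B r (1/2)) z
        in 0 \<le> x i \<and> x i \<le> 1/2 - z \<and> P (x i) \<le> B i \<and>
           (\<forall>a. 0 \<le> a \<and> a \<le> 1/2 - z \<and> P a \<le> B i \<longrightarrow>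
                 v i a - P a \<le> v i (x i) - P (x i)) \<and>
           pay i = P (x i))"

definition ep_allocation ::
  "(nat \<Rightarrow> real \<Rightarrow> real) \<Rightarrow> (nat \<Rightarrow> real) \<Rightarrow> nat \<Rightarrow> nat
    \<Rightarrow> (nat \<Rightarrow> real) \<Rightarrow> (nat \<Rightarrow> real) \<Rightarrow> (nat \<Rightarrow> real) \<Rightarrow> nat \<Rightarrow> real" where
  "ep_allocation v B r1 r2 x x' pay' i =
     (if i \<noteq> r1 then x i
      else if v r1 (x' r1) - pay' r1 \<ge> v r1 (1/2) - 2 * vbar v B r2 (1/2) then x' r1
      else 1/2)"

definition is_r1 :: "(nat \<Rightarrow> real \<Rightarrow> real) \<Rightarrow> (nat \<Rightarrow> real) \<Rightarrow> nat \<Rightarrow> nat \<Rightarrow> bool" where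
  "is_r1 v B n r1 \<longleftrightarrow> r1 < n \<and> (\<forall>i<n. vbar v B i (1/2) \<le> vbar v B r1 (1/2))"

definition is_r2 :: "(nat \<Rightarrow> real \<Rightarrow> real) \<Rightarrow> (nat \<Rightarrow> real) \<Rightarrow> nat \<Rightarrow> nat \<Rightarrow> nat \<Rightarrow> bool" where
  "is_r2 v B n r1 r2 \<longleftrightarrow> r2 < n \<and> r2 \<noteq> r1 \<and>
     (\<forall>i<n. i \<noteq> r1 \<longrightarrow> vbar v B i (1/2) \<le> vbar v B r2 (1/2))"

end

theory Submission
  imports Defs
begin

text \<open>Let c be the budget-capped value of the top bidder r1 for half of the good. The price
curve for the other bidders doubles k = O(log n) times, from c/4 up to about n c. If almost the
whole half is sold, the revenue, which the buyers' liquid welfare covers, is of order n c / k,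
whereas by subadditivity the optimum is at most 2 n c. Otherwise supply is left at the current
price level q: a bidder could have bought his optimal share y up to 1/(2k) at unit price at most
2q, and larger shares are worth at most 2c \<le> 4 k c y to him; moreover q is at most c plus k
times the revenue. Finally the rule for r1 makes c itself at most O(k) times the achieved
welfare. Since k \<le> 9 log n, the optimum is at most 120 k^2 times the achieved welfare.\<close>

section \<open>The price curve\<close>

definition price_level :: "nat \<Rightarrow> real \<Rightarrow> real \<Rightarrow> real" where
  "price_level k c t = 2 ^ (nat \<lfloor>2 * real k * t\<rfloor> + 1) / 8 * c"

lemma price_level_nonneg: "0 \<le> c \<Longrightarrow> 0 \<le> price_level k c t"
  unfolding price_level_def by simp

lemma price_level_mono:
  assumes "0 \<le> c" "s \<le> t"
  shows "price_level k c s \<le> price_level k c t"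
proof -
  have "nat \<lfloor>2 * real k * s\<rfloor> \<le> nat \<lfloor>2 * real k * t\<rfloor>"
    using assms(2) by (intro nat_mono floor_mono mult_left_mono) auto
  then have "(2::real) ^ (nat \<lfloor>2 * real k * s\<rfloor> + 1) \<le> 2 ^ (nat \<lfloor>2 * real k * t\<rfloor> + 1)"
    by (intro power_increasing) auto
  then show ?thesis
    unfolding price_level_def using assms(1) by (intro mult_right_mono divide_right_mono) auto
qed

lemma price_level_step:
  assumes "0 < k" "0 \<le> t"
  shows "price_level k c (t + 1 / (2 * real k)) = 2 * price_level k c t"
proof -
  have "2 * real k * (t + 1 / (2 * real k)) = 2 * real k * t + 1"
    using assms(1) by (simp add: field_simps)
  moreover have "0 \<le> \<lfloor>2 * real k * t\<rfloor>"
    using assms by simp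
  ultimately show ?thesis
    unfolding price_level_def by (simp add: nat_add_distrib)
qed

lemma price_level_first_step:
  assumes "0 \<le> t" "2 * real k * t < 1"
  shows "price_level k c t = c / 4"
proof -
  have "\<lfloor>2 * real k * t\<rfloor> = 0"
    using assms by (simp add: floor_eq_iff)
  then show ?thesis
    unfolding price_level_def by simp
qed

lemma price_level_at_step:
  assumes "0 < k"
  shows "price_level k c (real j / (2 * real k)) = 2 ^ (j + 1) / 8 * c"
  using assms unfolding price_level_def by simp

lemma price_eq_level: "0 \<le> t \<Longrightarrow> t < 1/2 \<Longrightarrow> price k c t = price_level k c t"
  unfolding price_def price_level_def by simp

lemma price_nonneg: "0 \<le> c \<Longrightarrow> 0 \<le> price k c t"
  unfolding price_def by auto

lemma price_le_level:
  assumes "0 \<le> c" "t \<le> T"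
  shows "price k c t \<le> price_level k c T"
proof (cases "0 \<le> t \<and> t < 1/2")
  case True
  then show ?thesis
    using price_level_mono[OF assms] by (simp add: price_eq_level)
next
  case False
  then have "price k c t = 0"
    unfolding price_def by auto
  then show ?thesis
    using price_level_nonneg[OF assms(1)] by simp
qed

lemma price_integrable:
  assumes "0 \<le> c" "0 \<le> a" "b \<le> 1/2"
  shows "price k c integrable_on {a..b}"
proof -
  have "mono_on {a..b} (price_level k c)"
    by (rule mono_onI) (rule price_level_mono[OF assms(1)])
  then have level: "price_level k c integrable_on {a..b}"
    by (rule integrable_on_mono_on)
  show ?thesis
    by (rule integrable_spike_finite[of "{1/2}", OF _ _ level]) (use assms in \<open>auto simp: price_eq_level\<close>)
qed

lemma integral_price_mono:
  assumes "0 \<le> c" "0 \<le> a" "a \<le> s" "s \<le> t" "t \<le> b" "b \<le> 1/2"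
  shows "integral {s..t} (price k c) \<le> integral {a..b} (price k c)"
  by (rule integral_subset_le) (use assms price_integrable price_nonneg in auto)

lemma integral_price_ge:
  assumes "0 \<le> c" "0 \<le> s" "s \<le> t" "t < 1/2"
  shows "(t - s) * price_level k c s \<le> integral {s..t} (price k c)"
proof -
  have "integral {s..t} (\<lambda>_. price_level k c s) \<le> integral {s..t} (price k c)"
    by (rule integral_le) (use assms price_integrable price_eq_level price_level_mono in auto)
  then show ?thesis
    using assms by simp
qed

lemma cost_zero: "cost k c z 0 = 0"
  unfolding cost_def by simp

lemma cost_nonneg:
  assumes "0 \<le> c" "0 \<le> z" "0 \<le> a" "z + a \<le> 1/2"
  shows "0 \<le> cost k c z a"
  unfolding cost_def by (rule integral_nonneg) (use assms price_integrable price_nonneg in auto)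

lemma cost_le:
  assumes "0 \<le> c" "0 \<le> z" "0 \<le> a" "z + a \<le> 1/2"
  shows "cost k c z a \<le> a * price_level k c (z + a)"
proof -
  have "cost k c z a \<le> integral {z..z + a} (\<lambda>_. price_level k c (z + a))"
    unfolding cost_def by (rule integral_le) (use assms price_integrable price_le_level in auto)
  then show ?thesis
    using assms by simp
qed

lemma kpar_bounds:
  assumes "2 \<le> n"
  shows "1 \<le> log 2 (real n)" "8 \<le> kpar n" "real (kpar n) \<le> 9 * log 2 (real n)"
    "real n \<le> 2 ^ kpar n"
proof -
  let ?L = "log 2 (real n)"
  show L: "1 \<le> ?L"
    using assms by (simp add: le_log_iff)
  have ceil: "8 * ?L \<le> of_int \<lceil>8 * ?L\<rceil>" "of_int \<lceil>8 * ?L\<rceil> < 8 * ?L + 1"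
    by linarith+
  then have k: "real (kpar n) = of_int \<lceil>8 * ?L\<rceil>"
    unfolding kpar_def using L by simp
  show "real (kpar n) \<le> 9 * ?L"
    using k ceil L by linarith
  have "8 \<le> real (kpar n)"
    using k ceil L by linarith
  then show "8 \<le> kpar n"
    by simp
  have "real n = 2 powr ?L"
    using assms by simp
  also have "\<dots> \<le> 2 powr real (kpar n)"
    using k ceil by (intro powr_mono) linarith+
  also have "\<dots> = 2 ^ kpar n"
    by (simp add: powr_realpow)
  finally show "real n \<le> 2 ^ kpar n" .
qed

section \<open>Subadditive valuations\<close>

lemma valuation_zero: "valuation f \<Longrightarrow> f 0 = 0"
  unfolding valuation_def by simp

lemma valuation_nonneg: "valuation f \<Longrightarrow> 0 \<le> a \<Longrightarrow> a \<le> 1 \<Longrightarrow> 0 \<le> f a"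
  unfolding valuation_def by auto

lemma valuation_mono: "valuation f \<Longrightarrow> 0 \<le> a \<Longrightarrow> a \<le> b \<Longrightarrow> b \<le> 1 \<Longrightarrow> f a \<le> f b"
  unfolding valuation_def by auto

lemma valuation_subadditive:
  "valuation f \<Longrightarrow> 0 \<le> a \<Longrightarrow> 0 \<le> b \<Longrightarrow> a + b \<le> 1 \<Longrightarrow> f (a + b) \<le> f a + f b"
  unfolding valuation_def by blast

lemma valuation_le_twice_half:
  assumes "valuation f" "0 \<le> y" "y \<le> 1"
  shows "f y \<le> 2 * f (1/2)"
proof (cases "y \<le> 1/2")
  case True
  then show ?thesis
    using valuation_mono[OF assms(1,2) True] valuation_nonneg[OF assms(1), of "1/2"] by simp
next
  case False
  have "f ((y - 1/2) + 1/2) \<le> f (y - 1/2) + f (1/2)"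
    by (rule valuation_subadditive) (use assms False in auto)
  moreover have "f (y - 1/2) \<le> f (1/2)"
    using valuation_mono[OF assms(1), of "y - 1/2" "1/2"] False assms by simp
  ultimately show ?thesis
    by simp
qed

lemma valuation_mult:
  assumes "valuation f" "0 \<le> a" "real m * a \<le> 1"
  shows "f (real m * a) \<le> real m * f a"
  using assms(3)
proof (induction m)
  case 0
  then show ?case
    using valuation_zero[OF assms(1)] by simp
next
  case (Suc m)
  have "f (real m * a + a) \<le> f (real m * a) + f a"
    by (rule valuation_subadditive) (use assms Suc.prems in \<open>auto simp: algebra_simps\<close>)
  also have "\<dots> \<le> real m * f a + f a"
    using Suc assms(2) by (simp add: algebra_simps)
  finally show ?case
    by (simp add: algebra_simps)
qed

lemma vbar_nonneg:
  "valuation (v i) \<Longrightarrow> 0 < B i \<Longrightarrow> 0 \<le> y \<Longrightarrow> y \<le> 1 \<Longrightarrow> 0 \<le> vbar v B i y"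
  unfolding vbar_def using valuation_nonneg by fastforce

lemma vbar_le_twice_half:
  assumes "valuation (v i)" "0 < B i" "0 \<le> y" "y \<le> 1"
  shows "vbar v B i y \<le> 2 * vbar v B i (1/2)"
  using valuation_le_twice_half[OF assms(1,3,4)] assms(2) unfolding vbar_def by (auto simp: min_def)

section \<open>Liquid welfare\<close>

definition feasible :: "nat \<Rightarrow> (nat \<Rightarrow> real) \<Rightarrow> bool" where
  "feasible n y \<longleftrightarrow> (\<forall>i<n. 0 \<le> y i) \<and> (\<Sum>i<n. y i) = 1"

lemma feasible_le_1:
  assumes "feasible n y" "i < n"
  shows "y i \<le> 1"
proof -
  have "y i \<le> (\<Sum>i<n. y i)"
    by (rule member_le_sum) (use assms in \<open>auto simp: feasible_def\<close>)
  then show ?thesis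
    using assms(1) by (simp add: feasible_def)
qed

lemma feasible_sum_others_le_1:
  assumes "feasible n y"
  shows "(\<Sum>i\<in>{i. i < n \<and> i \<noteq> r}. y i) \<le> 1"
proof -
  have "(\<Sum>i\<in>{i. i < n \<and> i \<noteq> r}. y i) \<le> (\<Sum>i<n. y i)"
    by (rule sum_mono2) (use assms in \<open>auto simp: feasible_def\<close>)
  then show ?thesis
    using assms by (simp add: feasible_def)
qed

lemma opt_liquid_welfare_eq: "opt_liquid_welfare v B n = Sup {liquid_welfare v B n y | y. feasible n y}"
  unfolding opt_liquid_welfare_def feasible_def ..

lemma opt_liquid_welfare_le:
  assumes "0 < n" "\<And>y. feasible n y \<Longrightarrow> liquid_welfare v B n y \<le> M"
  shows "opt_liquid_welfare v B n \<le> M"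
proof -
  have "feasible n (\<lambda>i. if i = 0 then 1 else 0)"
    using assms(1) by (simp add: feasible_def sum.delta)
  then have "{liquid_welfare v B n y | y. feasible n y} \<noteq> {}"
    by blast
  then show ?thesis
    unfolding opt_liquid_welfare_eq by (rule cSup_least) (use assms(2) in blast)
qed

lemma liquid_welfare_split:
  assumes "r < n"
  shows "liquid_welfare v B n y = vbar v B r (y r) + (\<Sum>i\<in>{i. i < n \<and> i \<noteq> r}. vbar v B i (y i))"
proof -
  have "{..<n} - {r} = {i. i < n \<and> i \<noteq> r}"
    by auto
  then show ?thesis
    unfolding liquid_welfare_def using assms by (simp add: sum.remove)
qed

section \<open>A run of Sell-Without\<close>

locale sell_without_run =
  fixes v B n r ord x pay
  assumes run: "sell_without v B n r ord x pay"
    and valuations: "\<And>i. i < n \<Longrightarrow> valuation (v i)"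
    and budgets_pos: "\<And>i. i < n \<Longrightarrow> 0 < B i"
    and r_less: "r < n"
    and n_ge_2: "2 \<le> n"
begin

definition "c = vbar v B r (1/2)"
definition "k = kpar n"
definition "z m = (\<Sum>j<m. x (ord ! j))"
definition "Z = z (length ord)"
definition "revenue = integral {0..Z} (price k c)"

lemma c_nonneg: "0 \<le> c"
  unfolding c_def using vbar_nonneg valuations budgets_pos r_less by simp

lemma k_ge_8: "8 \<le> k"
  unfolding k_def using kpar_bounds(2)[OF n_ge_2] .

lemma k_pos: "0 < real k"
  using k_ge_8 by simp

lemma ord_distinct: "distinct ord" and set_ord: "set ord = {i. i < n \<and> i \<noteq> r}"
  using run unfolding sell_without_def by auto

lemma ord_nth: "m < length ord \<Longrightarrow> ord ! m < n \<and> ord ! m \<noteq> r"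
  using set_ord nth_mem by fastforce

lemma obtain_turn:
  assumes "i < n" "i \<noteq> r"
  obtains m where "m < length ord" "ord ! m = i"
  using assms set_ord by (metis (mono_tags, lifting) in_set_conv_nth mem_Collect_eq)

lemma turn:
  assumes "m < length ord"
  shows x_nonneg: "0 \<le> x (ord ! m)"
    and x_le_remaining: "x (ord ! m) \<le> 1/2 - z m"
    and best_response: "\<And>a. 0 \<le> a \<Longrightarrow> a \<le> 1/2 - z m \<Longrightarrow> cost k c (z m) a \<le> B (ord ! m) \<Longrightarrow>
        v (ord ! m) a - cost k c (z m) a \<le> v (ord ! m) (x (ord ! m)) - cost k c (z m) (x (ord ! m))"
    and pay_eq_cost: "pay (ord ! m) = cost k c (z m) (x (ord ! m))"
    and pay_le_budget: "pay (ord ! m) \<le> B (ord ! m)"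
  using run assms unfolding sell_without_def Let_def z_def c_def k_def by auto

lemma z_Suc: "z (Suc m) = z m + x (ord ! m)"
  by (simp add: z_def)

lemma z_bounds: "m \<le> length ord \<Longrightarrow> 0 \<le> z m \<and> z m \<le> 1/2"
proof (induction m)
  case 0
  then show ?case
    by (simp add: z_def)
next
  case (Suc m)
  then show ?case
    using z_Suc[of m] x_nonneg[of m] x_le_remaining[of m] by auto
qed

lemma z_le_Z: "m \<le> length ord \<Longrightarrow> z m \<le> Z"
  unfolding Z_def z_def by (rule sum_mono2) (use x_nonneg in auto)

lemma Z_bounds: "0 \<le> Z" "Z \<le> 1/2"
  using z_bounds[of "length ord"] by (auto simp: Z_def)

lemma x_bounds:
  assumes "i < n" "i \<noteq> r"
  shows "0 \<le> x i" "x i \<le> 1/2"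
proof -
  obtain m where "m < length ord" "ord ! m = i"
    using obtain_turn assms .
  then show "0 \<le> x i" "x i \<le> 1/2"
    using x_nonneg[of m] x_le_remaining[of m] z_bounds[of m] by auto
qed

lemma pay_nonneg:
  assumes "m < length ord"
  shows "0 \<le> pay (ord ! m)"
  using pay_eq_cost[OF assms] x_nonneg[OF assms] x_le_remaining[OF assms] z_bounds[of m] assms
  by (auto intro!: cost_nonneg c_nonneg)

lemma value_ge_deviation:
  assumes "m < length ord" "0 \<le> a" "a \<le> 1/2 - z m" "cost k c (z m) a \<le> B (ord ! m)"
  shows "v (ord ! m) a - cost k c (z m) a \<le> v (ord ! m) (x (ord ! m))"
  using best_response[OF assms] pay_nonneg[OF assms(1)] pay_eq_cost[OF assms(1)] by simp

lemma pay_le_vbar: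
  assumes "m < length ord"
  shows "pay (ord ! m) \<le> vbar v B (ord ! m) (x (ord ! m))"
proof -
  have "0 \<le> v (ord ! m) (x (ord ! m)) - pay (ord ! m)"
    using best_response[OF assms, of 0] z_bounds[of m] assms cost_zero pay_eq_cost[OF assms]
      budgets_pos[of "ord ! m"] ord_nth[OF assms] valuation_zero[OF valuations]
    by auto
  then show ?thesis
    using pay_le_budget[OF assms] unfolding vbar_def by simp
qed

lemma sum_pay_eq_integral:
  "m \<le> length ord \<Longrightarrow> (\<Sum>j<m. pay (ord ! j)) = integral {0..z m} (price k c)"
proof (induction m)
  case 0
  then show ?case
    by (simp add: z_def)
next
  case (Suc m)
  have bounds: "0 \<le> z m" "z m \<le> z (Suc m)" "z (Suc m) \<le> 1/2"
    using z_bounds[of m] z_bounds[of "Suc m"] Suc.prems z_Suc[of m] x_nonneg[of m] by auto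
  have "integral {0..z m} (price k c) + integral {z m..z (Suc m)} (price k c)
      = integral {0..z (Suc m)} (price k c)"
    by (rule Henstock_Kurzweil_Integration.integral_combine) (use bounds c_nonneg price_integrable in auto)
  then show ?case
    using Suc pay_eq_cost[of m] z_Suc[of m] by (simp add: cost_def)
qed

lemma sum_others_eq_sum_turns:
  "(\<Sum>i\<in>{i. i < n \<and> i \<noteq> r}. f i) = (\<Sum>j<length ord. f (ord ! j))"
  using sum_list_distinct_conv_sum_set[OF ord_distinct, of f] set_ord
  by (simp add: sum_list_sum_nth atLeast0LessThan)

lemma revenue_eq_sum_pay: "revenue = (\<Sum>i\<in>{i. i < n \<and> i \<noteq> r}. pay i)"
  unfolding revenue_def Z_def sum_others_eq_sum_turns using sum_pay_eq_integral by simp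

lemma revenue_nonneg: "0 \<le> revenue"
  unfolding revenue_eq_sum_pay sum_others_eq_sum_turns by (rule sum_nonneg) (use pay_nonneg in auto)

lemma revenue_le_welfare: "revenue \<le> (\<Sum>i\<in>{i. i < n \<and> i \<noteq> r}. vbar v B i (x i))"
  unfolding revenue_eq_sum_pay sum_others_eq_sum_turns by (rule sum_mono) (use pay_le_vbar in auto)

lemma deviation_gain_small:
  assumes unsold: "Z \<le> 1/2 - 1/(2 * real k)" and i: "i < n" "i \<noteq> r"
    and y: "0 \<le> y" "y \<le> 1/(2 * real k)"
  shows "vbar v B i y \<le> vbar v B i (x i) + 2 * price_level k c Z * y"
proof -
  obtain m where m: "m < length ord" "ord ! m = i"
    using obtain_turn i .
  have zm: "0 \<le> z m" "z m \<le> Z"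
    using z_bounds[of m] z_le_Z[of m] m by auto
  have room: "z m + y \<le> 1/2"
    using zm unsold y by simp
  \<comment> \<open>The extra share stays within the next step of the curve.\<close>
  have "price_level k c (z m + y) \<le> price_level k c (Z + 1/(2 * real k))"
    by (rule price_level_mono) (use c_nonneg zm y in auto)
  also have "\<dots> = 2 * price_level k c Z"
    by (rule price_level_step) (use k_pos Z_bounds in auto)
  finally have "y * price_level k c (z m + y) \<le> y * (2 * price_level k c Z)"
    using y by (intro mult_left_mono) auto
  then have cost: "cost k c (z m) y \<le> 2 * price_level k c Z * y"
    using cost_le[where k=k, OF c_nonneg zm(1) y(1) room] by (simp add: mult.commute)
  have gain_nonneg: "0 \<le> 2 * price_level k c Z * y"
    using price_level_nonneg[OF c_nonneg] y by simp
  show ?thesis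
  proof (cases "cost k c (z m) y \<le> B i")
    case True
    then have "v i y - cost k c (z m) y \<le> v i (x i)"
      using value_ge_deviation[OF m(1) y(1)] room m by auto
    then show ?thesis
      using cost gain_nonneg unfolding vbar_def by linarith
  next
    case False
    moreover have "0 \<le> vbar v B i (x i)"
      using vbar_nonneg valuations budgets_pos i x_bounds[OF i] by auto
    ultimately show ?thesis
      using cost unfolding vbar_def by linarith
  qed
qed

lemma deviation_gain:
  assumes unsold: "Z \<le> 1/2 - 1/(2 * real k)" and i: "i < n" "i \<noteq> r"
    and y: "0 \<le> y" "y \<le> 1" and weak: "vbar v B i (1/2) \<le> c"
  shows "vbar v B i y \<le> vbar v B i (x i) + (2 * price_level k c Z + 4 * real k * c) * y"
proof (cases "y \<le> 1/(2 * real k)")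
  case True
  moreover have "0 \<le> 4 * real k * c * y"
    using c_nonneg y by simp
  ultimately show ?thesis
    using deviation_gain_small[OF unsold i y(1)] by (simp add: algebra_simps)
next
  case False
  then have "2 * c \<le> 4 * real k * c * y"
    using k_pos c_nonneg mult_left_mono[of 1 "2 * real k * y" "2 * c"] by (simp add: field_simps)
  moreover have "vbar v B i y \<le> 2 * c"
    using vbar_le_twice_half[of v i B y] valuations budgets_pos i y weak by simp
  moreover have "0 \<le> vbar v B i (x i)" "0 \<le> price_level k c Z * y"
    using vbar_nonneg valuations budgets_pos i x_bounds[OF i] price_level_nonneg[OF c_nonneg] y
    by auto
  ultimately show ?thesis
    by (simp add: algebra_simps)
qed

lemma price_level_le_revenue:
  assumes "Z < 1/2"
  shows "price_level k c Z \<le> c/4 + 4 * real k * revenue"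
proof (cases "1 \<le> 2 * real k * Z")
  case True
  define s where "s = Z - 1/(2 * real k)"
  have s: "0 \<le> s" "s \<le> Z"
    using True k_pos unfolding s_def by (auto simp: field_simps)
  have "(1/(2 * real k)) * price_level k c s \<le> integral {s..Z} (price k c)"
    using integral_price_ge[OF c_nonneg s assms] unfolding s_def by simp
  also have "\<dots> \<le> revenue"
    unfolding revenue_def by (rule integral_price_mono) (use c_nonneg s Z_bounds in auto)
  finally have "price_level k c Z \<le> 4 * real k * revenue"
    using price_level_step[OF _ s(1), of k c] k_pos unfolding s_def by (simp add: field_simps)
  then show ?thesis
    using c_nonneg by simp
next
  case False
  then have "price_level k c Z = c/4"
    using Z_bounds by (intro price_level_first_step) auto
  moreover have "0 \<le> 4 * real k * revenue"
    using revenue_nonneg by simp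
  ultimately show ?thesis
    by simp
qed

lemma revenue_ge_top:
  assumes "1/2 - 1/(2 * real k) < Z"
  shows "2 ^ k * c / (32 * real k) \<le> revenue"
proof -
  define s where "s = 1/2 - 1 / real k"
  define t where "t = 1/2 - 1/(2 * real k)"
  have "real (k - 2) = real k - 2"
    using k_ge_8 by simp
  then have s_step: "s = real (k - 2) / (2 * real k)"
    unfolding s_def using k_pos by (simp add: field_simps)
  have "1 / real k \<le> 1/2" "1/(2 * real k) \<le> 1 / real k"
    using k_ge_8 by (auto simp: divide_le_eq intro!: divide_left_mono)
  then have st: "0 \<le> s" "s \<le> t" "t < 1/2" "t - s = 1/(2 * real k)"
    unfolding s_def t_def using k_pos by auto
  have "k - 2 + 1 = k - 1"
    using k_ge_8 by simp
  then have level: "price_level k c s = 2 ^ (k - 1) / 8 * c"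
    using price_level_at_step[of k c "k - 2"] k_ge_8 unfolding s_step by simp
  have "(t - s) * price_level k c s \<le> integral {s..t} (price k c)"
    using integral_price_ge[OF c_nonneg st(1-3)] .
  also have "\<dots> \<le> revenue"
    unfolding revenue_def
    by (rule integral_price_mono) (use c_nonneg st assms Z_bounds in \<open>auto simp: t_def\<close>)
  finally have "(1/(2 * real k)) * (2 ^ (k - 1) / 8 * c) \<le> revenue"
    unfolding level st(4) .
  moreover have "(2::real) ^ k = 2 * 2 ^ (k - 1)"
    using k_ge_8 by (simp add: power_eq_if)
  ultimately show ?thesis
    using k_pos by (simp add: field_simps)
qed

lemma revenue_ge_early:
  assumes "1/(4 * real k) \<le> Z"
  shows "c / (16 * real k) \<le> revenue"
proof -
  have "1/(4 * real k) < 1/2"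
    using k_ge_8 by (simp add: field_simps)
  then have "(1/(4 * real k)) * price_level k c 0 \<le> integral {0..1/(4 * real k)} (price k c)"
    using integral_price_ge[OF c_nonneg order_refl, of "1/(4 * real k)"] k_pos by simp
  also have "\<dots> \<le> revenue"
    unfolding revenue_def by (rule integral_price_mono) (use c_nonneg assms Z_bounds k_pos in auto)
  finally show ?thesis
    using price_level_first_step[of 0 k c] by simp
qed

lemma early_buyer_value:
  assumes m: "m < length ord" "ord ! m = s" and early: "z m < 1/(4 * real k)"
    and strong: "c \<le> 4 * vbar v B s (1/2)"
  shows "c / (16 * real k) \<le> vbar v B s (x s)"
proof -
  define a where "a = 1/(4 * real k)"
  define h where "h = vbar v B s (1/2)"
  have s: "s < n" "valuation (v s)" "0 < B s"
    using ord_nth m valuations budgets_pos by auto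
  have h0: "0 \<le> h"
    unfolding h_def using vbar_nonneg[of v s B "1/2"] s by simp
  have h_le: "h \<le> v s (1/2)" "h \<le> B s"
    unfolding h_def vbar_def by auto
  have "h * 1 \<le> h * (4 * real k)"
    using h0 k_ge_8 by (intro mult_left_mono) auto
  then have h_quarter: "h / (4 * real k) \<le> h"
    using k_pos by (simp add: divide_le_eq)
  have zm: "0 \<le> z m" "z m + a < 1/(2 * real k)"
    using z_bounds[of m] m early unfolding a_def by auto
  have "1/(2 * real k) \<le> 1/2"
    using k_ge_8 by (simp add: divide_le_eq)
  then have a: "0 \<le> a" "z m + a \<le> 1/2"
    using zm unfolding a_def by auto
  have "2 * real k * (z m + a) < 1"
    using zm(2) k_pos by (simp add: field_simps)
  then have level: "price_level k c (z m + a) = c/4"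
    using zm a by (intro price_level_first_step) auto
  have "cost k c (z m) a \<le> c / (16 * real k)"
    using cost_le[where k=k, OF c_nonneg zm(1) a] unfolding level by (simp add: a_def)
  also have c_le: "\<dots> \<le> h / (4 * real k)"
    using strong k_pos unfolding h_def by (simp add: divide_le_eq)
  finally have cost: "cost k c (z m) a \<le> h / (4 * real k)" .
  have half: "real (2 * k) * a = 1/2"
    using k_pos unfolding a_def by simp
  have "v s (1/2) \<le> real (2 * k) * v s a"
    using valuation_mult[OF s(2) a(1), of "2 * k"] unfolding half by simp
  then have "h / (2 * real k) \<le> v s a"
    using h_le k_pos by (simp add: divide_le_eq mult.commute)
  moreover have "v s a - cost k c (z m) a \<le> v s (x s)"
    using value_ge_deviation[OF m(1) a(1)] a cost h_quarter h_le m by simp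
  ultimately have "h / (4 * real k) \<le> v s (x s)"
    using cost by (simp add: field_simps)
  then show ?thesis
    using c_le h_quarter h_le unfolding vbar_def by simp
qed

lemma strong_buyer_bound:
  assumes s: "s < n" "s \<noteq> r" and strong: "c \<le> 4 * vbar v B s (1/2)"
  shows "c / (16 * real k) \<le> revenue \<or> c / (16 * real k) \<le> vbar v B s (x s)"
proof -
  obtain m where m: "m < length ord" "ord ! m = s"
    using obtain_turn s .
  show ?thesis
  proof (cases "z m < 1/(4 * real k)")
    case True
    then show ?thesis
      using early_buyer_value[OF m True strong] by simp
  next
    case False
    then show ?thesis
      using revenue_ge_early z_le_Z[of m] m by simp
  qed
qed

end

section \<open>Estimate-and-Price\<close>

locale estimate_and_price =
  fixes v B n r1 r2 ord1 ord2 x pay x' pay'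
  assumes n_ge_2: "2 \<le> n"
    and valuations: "\<And>i. i < n \<Longrightarrow> valuation (v i)"
    and budgets_pos: "\<And>i. i < n \<Longrightarrow> 0 < B i"
    and r1: "is_r1 v B n r1" and r2: "is_r2 v B n r1 r2"
    and run1: "sell_without v B n r1 ord1 x pay"
    and run2: "sell_without v B n r2 ord2 x' pay'"
begin

lemma r1_less: "r1 < n" and r2_less: "r2 < n" and r2_ne_r1: "r2 \<noteq> r1"
  and r1_max: "\<And>i. i < n \<Longrightarrow> vbar v B i (1/2) \<le> vbar v B r1 (1/2)"
  using r1 r2 unfolding is_r1_def is_r2_def by auto

sublocale wo_r1: sell_without_run v B n r1 ord1 x pay
  by unfold_locales (use run1 valuations budgets_pos r1_less n_ge_2 in auto)

sublocale wo_r2: sell_without_run v B n r2 ord2 x' pay'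
  by unfold_locales (use run2 valuations budgets_pos r2_less n_ge_2 in auto)

definition "alloc = ep_allocation v B r1 r2 x x' pay'"
definition "welfare = liquid_welfare v B n alloc"

lemma vbar_nonneg_at: "i < n \<Longrightarrow> 0 \<le> y \<Longrightarrow> y \<le> 1 \<Longrightarrow> 0 \<le> vbar v B i y"
  using vbar_nonneg valuations budgets_pos by blast

lemma welfare_split:
  "welfare = vbar v B r1 (alloc r1) + (\<Sum>i\<in>{i. i < n \<and> i \<noteq> r1}. vbar v B i (x i))"
  unfolding welfare_def liquid_welfare_split[OF r1_less]
  by (simp add: alloc_def ep_allocation_def)

lemma vbar_alloc_r1_nonneg: "0 \<le> vbar v B r1 (alloc r1)"
  using vbar_nonneg_at[OF r1_less] wo_r2.x_bounds[OF r1_less] r2_ne_r1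
  unfolding alloc_def ep_allocation_def by auto

lemma vbar_x_nonneg: "i < n \<Longrightarrow> i \<noteq> r1 \<Longrightarrow> 0 \<le> vbar v B i (x i)"
  using vbar_nonneg_at[of i "x i"] wo_r1.x_bounds[of i] by simp

lemma others_welfare_nonneg: "0 \<le> (\<Sum>i\<in>{i. i < n \<and> i \<noteq> r1}. vbar v B i (x i))"
  by (rule sum_nonneg) (use vbar_x_nonneg in auto)

lemma welfare_nonneg: "0 \<le> welfare"
  using welfare_split vbar_alloc_r1_nonneg others_welfare_nonneg by simp

lemma revenue_le_final_welfare: "wo_r1.revenue \<le> welfare"
  using wo_r1.revenue_le_welfare welfare_split vbar_alloc_r1_nonneg by simp

lemma vbar_r2_le_welfare: "vbar v B r2 (x r2) \<le> welfare"
proof -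
  have "vbar v B r2 (x r2) \<le> (\<Sum>i\<in>{i. i < n \<and> i \<noteq> r1}. vbar v B i (x i))"
    by (rule member_le_sum) (use r2_less r2_ne_r1 vbar_x_nonneg in auto)
  then show ?thesis
    using welfare_split vbar_alloc_r1_nonneg by simp
qed

lemma scale_le_welfare: "wo_r1.c \<le> 16 * real wo_r1.k * welfare"
proof -
  \<comment> \<open>If r1 keeps his bundle from the run without r2 although r2 is weak, his utility shows
    that the bundle is worth c/2 to him; if r2 is strong, the run without r1 serves r2 well or
    has earned enough before r2's turn.\<close>
  define c2 where "c2 = vbar v B r2 (1/2)"
  have c: "wo_r1.c \<le> v r1 (1/2)" "wo_r1.c \<le> B r1"
    unfolding wo_r1.c_def vbar_def by auto
  have "wo_r1.c / (16 * real wo_r1.k) \<le> wo_r1.c / 2"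
    using wo_r1.c_nonneg wo_r1.k_ge_8 by (intro divide_left_mono) auto
  moreover have "wo_r1.c / 2 \<le> welfare \<or> wo_r1.c / (16 * real wo_r1.k) \<le> welfare"
  proof (cases "v r1 (x' r1) - pay' r1 \<ge> v r1 (1/2) - 2 * c2")
    case False
    then have half: "alloc r1 = 1/2"
      unfolding alloc_def ep_allocation_def c2_def by simp
    have "wo_r1.c \<le> welfare"
      using welfare_split others_welfare_nonneg unfolding wo_r1.c_def half by simp
    then show ?thesis
      using wo_r1.c_nonneg by simp
  next
    case keeps: True
    then have alloc: "alloc r1 = x' r1"
      unfolding alloc_def ep_allocation_def c2_def by simp
    show ?thesis
    proof (cases "4 * c2 \<le> v r1 (1/2)")
      case True
      obtain m where "m < length ord2" "ord2 ! m = r1"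
        using wo_r2.obtain_turn[OF r1_less r2_ne_r1[symmetric]] .
      then have "0 \<le> pay' r1"
        using wo_r2.pay_nonneg by blast
      then have "wo_r1.c / 2 \<le> vbar v B r1 (alloc r1)"
        using keeps True c wo_r1.c_nonneg unfolding alloc vbar_def by simp
      then show ?thesis
        using welfare_split others_welfare_nonneg by simp
    next
      case False
      then have "wo_r1.c \<le> 4 * vbar v B r2 (1/2)"
        using c unfolding c2_def by simp
      then have "wo_r1.c / (16 * real wo_r1.k) \<le> welfare"
        using wo_r1.strong_buyer_bound[OF r2_less r2_ne_r1] revenue_le_final_welfare vbar_r2_le_welfare
        by (meson order_trans)
      then show ?thesis ..
    qed
  qed
  ultimately have "wo_r1.c / (16 * real wo_r1.k) \<le> welfare"
    by linarith
  then show ?thesis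
    using wo_r1.k_pos by (simp add: divide_le_eq mult.commute)
qed

lemma vbar_le_twice_scale:
  assumes "i < n" "0 \<le> t" "t \<le> 1"
  shows "vbar v B i t \<le> 2 * wo_r1.c"
  using vbar_le_twice_half[of v i B t] valuations budgets_pos r1_max[of i] assms
  unfolding wo_r1.c_def by simp

lemma low_supply_bound:
  assumes y: "feasible n y" and low: "wo_r1.Z \<le> 1/2 - 1/(2 * real wo_r1.k)"
  shows "liquid_welfare v B n y \<le> 120 * real wo_r1.k ^ 2 * welfare"
proof -
  let ?k = "real wo_r1.k" and ?c = wo_r1.c and ?R = wo_r1.revenue and ?W = welfare
  define q where "q = price_level wo_r1.k wo_r1.c wo_r1.Z"
  define others where "others = {i. i < n \<and> i \<noteq> r1}"
  have y_bounds: "0 \<le> y i" "y i \<le> 1" if "i < n" for i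
    using y feasible_le_1 that unfolding feasible_def by auto
  have "(\<Sum>i\<in>others. vbar v B i (y i)) \<le> (\<Sum>i\<in>others. vbar v B i (x i) + (2 * q + 4 * ?k * ?c) * y i)"
    unfolding others_def q_def
    by (rule sum_mono) (use wo_r1.deviation_gain[OF low] y_bounds r1_max in \<open>auto simp: wo_r1.c_def\<close>)
  also have "\<dots> = (\<Sum>i\<in>others. vbar v B i (x i)) + (2 * q + 4 * ?k * ?c) * (\<Sum>i\<in>others. y i)"
    by (simp add: sum.distrib sum_distrib_left)
  also have "\<dots> \<le> (\<Sum>i\<in>others. vbar v B i (x i)) + (2 * q + 4 * ?k * ?c)"
    using feasible_sum_others_le_1[OF y] price_level_nonneg[OF wo_r1.c_nonneg] wo_r1.c_nonneg
    unfolding others_def q_def by (intro add_left_mono mult_left_le) auto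
  finally have "liquid_welfare v B n y \<le> 2 * ?c + ?W + 2 * q + 4 * ?k * ?c"
    using liquid_welfare_split[OF r1_less, of v B y] vbar_le_twice_scale[OF r1_less y_bounds[OF r1_less]]
      welfare_split vbar_alloc_r1_nonneg unfolding others_def by simp
  also have "\<dots> \<le> 2.5 * ?c + ?W + 8 * (?k * ?R) + 4 * (?k * ?c)"
  proof -
    have "0 < 1 / (2 * ?k)"
      using wo_r1.k_pos by simp
    then have "wo_r1.Z < 1/2"
      using low by linarith
    then show ?thesis
      using wo_r1.price_level_le_revenue unfolding q_def by (simp add: algebra_simps)
  qed
  also have "\<dots> \<le> 40 * (?k * ?W) + ?W + 8 * (?k * ?W) + 64 * (?k ^ 2 * ?W)"
  proof -
    have "?k * ?R \<le> ?k * ?W"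
      using revenue_le_final_welfare wo_r1.k_pos by simp
    moreover have "?k * ?c \<le> ?k * (16 * ?k * ?W)"
      using scale_le_welfare wo_r1.k_pos by simp
    ultimately show ?thesis
      using scale_le_welfare by (simp add: power2_eq_square algebra_simps)
  qed
  also have "\<dots> \<le> 120 * (?k ^ 2 * ?W)"
  proof -
    have "?k \<le> ?k ^ 2"
      using wo_r1.k_ge_8 by (simp add: power2_eq_square)
    then have "1 * ?W \<le> ?k * ?W" "?k * ?W \<le> ?k ^ 2 * ?W"
      using welfare_nonneg wo_r1.k_ge_8 by (intro mult_right_mono; simp)+
    then show ?thesis
      using welfare_nonneg by linarith
  qed
  finally show ?thesis
    by simp
qed

lemma high_supply_bound:
  assumes y: "feasible n y" and high: "1/2 - 1/(2 * real wo_r1.k) < wo_r1.Z"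
  shows "liquid_welfare v B n y \<le> 120 * real wo_r1.k ^ 2 * welfare"
proof -
  let ?k = "real wo_r1.k"
  have "liquid_welfare v B n y \<le> (\<Sum>i<n. 2 * wo_r1.c)"
    unfolding liquid_welfare_def
    by (rule sum_mono) (use vbar_le_twice_scale y feasible_le_1 in \<open>auto simp: feasible_def\<close>)
  also have "\<dots> \<le> 2 * 2 ^ wo_r1.k * wo_r1.c"
    using kpar_bounds(4)[OF n_ge_2] wo_r1.c_nonneg unfolding wo_r1.k_def by (simp add: mult_right_mono)
  also have "\<dots> = 64 * ?k * (2 ^ wo_r1.k * wo_r1.c / (32 * ?k))"
    using wo_r1.k_pos by simp
  also have "\<dots> \<le> 64 * ?k * welfare"
    using wo_r1.revenue_ge_top[OF high] revenue_le_final_welfare wo_r1.k_pos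
    by (intro mult_left_mono) auto
  also have "\<dots> \<le> 120 * ?k ^ 2 * welfare"
    using welfare_nonneg wo_r1.k_ge_8 by (simp add: power2_eq_square mult_right_mono)
  finally show ?thesis .
qed

lemma feasible_welfare_bound:
  "feasible n y \<Longrightarrow> liquid_welfare v B n y \<le> 120 * real wo_r1.k ^ 2 * welfare"
  using low_supply_bound high_supply_bound by (cases "wo_r1.Z \<le> 1/2 - 1/(2 * real wo_r1.k)") auto

end

theorem mainTheorem18:
  shows "\<exists>C>0. \<forall>n::nat. \<forall>v B r1 r2 ord1 ord2 x pay x' pay'.
     n \<ge> 2 \<longrightarrow>
     (\<forall>i<n. valuation (v i)) \<longrightarrow>
     (\<forall>i<n. B i > 0) \<longrightarrow>
     is_r1 v B n r1 \<longrightarrow> is_r2 v B n r1 r2 \<longrightarrow>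
     sell_without v B n r1 ord1 x pay \<longrightarrow>
     sell_without v B n r2 ord2 x' pay' \<longrightarrow>
     liquid_welfare v B n (ep_allocation v B r1 r2 x x' pay')
       \<ge> opt_liquid_welfare v B n / (C * (log 2 (real n))^2)"
proof (intro exI[of _ "9720::real"] conjI allI impI)
  fix n :: nat and v B r1 r2 ord1 ord2 x pay x' pay'
  assume "n \<ge> 2" "\<forall>i<n. valuation (v i)" "\<forall>i<n. B i > 0" "is_r1 v B n r1" "is_r2 v B n r1 r2"
    "sell_without v B n r1 ord1 x pay" "sell_without v B n r2 ord2 x' pay'"
  then interpret estimate_and_price v B n r1 r2 ord1 ord2 x pay x' pay'
    by unfold_locales auto
  let ?L = "log 2 (real n)"
  have L: "1 \<le> ?L" "real wo_r1.k \<le> 9 * ?L"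
    using kpar_bounds[OF n_ge_2] unfolding wo_r1.k_def by auto
  have "opt_liquid_welfare v B n \<le> 120 * real wo_r1.k ^ 2 * welfare"
    by (rule opt_liquid_welfare_le) (use n_ge_2 feasible_welfare_bound in auto)
  also have "\<dots> \<le> 120 * (9 * ?L) ^ 2 * welfare"
    using L wo_r1.k_pos welfare_nonneg by (intro mult_right_mono mult_left_mono power_mono) auto
  finally have "opt_liquid_welfare v B n \<le> 9720 * ?L ^ 2 * welfare"
    by (simp add: power_mult_distrib)
  then show "opt_liquid_welfare v B n / (9720 * ?L ^ 2) \<le> liquid_welfare v B n (ep_allocation v B r1 r2 x x' pay')"
    using L unfolding welfare_def alloc_def by (simp add: divide_le_eq mult.commute)
qed (simp)

end
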